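(* Let $\Phi:B(H_{in})\to B(H_{out})$ be a quantum channel. Let $V=\mathrm{Range}\big((\mathrm{id}\otimes\pi_{op})(C_\Phi)\big)\subseteq H_{in}\otimes\overline{H_{out}}$, where $(\mathrm{id}\otimes\pi_{op})(C_\Phi)$ is regarded as a linear operator on $H_{in}\otimes\overline{H_{out}}$. Then, under the Hilbert space identification $B(H_{in})\otimes B(\overline{H_{out}})\cong (H_{in}\otimes\overline{H_{out}})\otimes(\overline{H_{in}}\otimes H_{out})$ given by $\theta_{\xi,\eta}\otimes\theta_{\overline{\zeta},\overline{\omega}}\mapsto(\xi\otimes\overline{\zeta})\otimes(\overline{\eta}\otimes\omega)$, one has $$(\mathrm{id}\otimes\pi_{op})(\tilde S_\Phi)\cong V\otimes\overline{V}.$$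
   Context: All Hilbert spaces are finite dimensional; inner products are linear in the second variable. $\theta_{\xi,\eta}(\eta')=\langle\eta,\eta'\rangle\xi$. A quantum channel is a trace-preserving completely positive map. $O=B(H_{out})$, and $O^{op}$ is its opposite algebra (product $a*b=ba$). $\overline{H}$ is the conjugate Hilbert space, $\xi\mapsto\overline{\xi}$ the antilinear identification; $\pi_{op}:O^{op}\to B(\overline{H_{out}})$ is the faithful representation $\pi_{op}(T)\overline{\xi}=\overline{T^*\xi}$. Let $\{e_i\}$ be an orthonormal basis of $H_{in}$ and $e_{ij}$ the matrix units. $C_\Phi=\sum_{i,j}e_{ij}\otimes\Phi(e_{ji})\in B(H_{in})\otimes O^{op}$. $\mathcal{M}_\Phi=H_{in}\otimes O^{op}$ is the right Hilbert $O^{op}$-module with $(\xi\otimes a)*x=\xi\otimes(a*x)$ and $\langle\xi\otimes a,\eta\otimes b\rangle_{O^{op}}=\langle\xi,\eta\rangle a^**b$, so that $\mathcal{L}(\mathcal{M}_\Phi)\cong B(H_{in})\otimes O^{op}$ and $C_\Phi\in\mathcal{L}(\mathcal{M}_\Phi)$. A Stinespring module related to $\Phi$ is a pair $(\mathcal{E},W)$, $\mathcal{E}$ a Hilbert $O^{op}$-module, $W$ an adjointable module map $\mathcal{M}_\Phi\to\mathcal{E}$ with $W^*W=C_\Phi$. The quantum confusability multigraph is $\tilde S_\Phi=W^*\mathcal{L}(\mathcal{E})W\subseteq B(H_{in})\otimes O^{op}$ (independent of the choice of Stinespring module). *)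

theory Defs
  imports Complex_Main "HOL-Library.Complex_Order"
begin

text \<open>Coordinates: H_in has orthonormal basis indexed by the finite type 'i,
  H_out by 'o. An operator on a space with basis indexed by 'a is a matrix
  'a => 'a => complex (row index first). The conjugate space of H_out uses the
  basis conj(e_o).\<close>

definition mat_unit :: "'a \<Rightarrow> 'a \<Rightarrow> ('a \<Rightarrow> 'a \<Rightarrow> complex)" where
  "mat_unit i j = (\<lambda>a b. if a = i \<and> b = j then 1 else 0)"

definition psd_on :: "'a set \<Rightarrow> ('a \<Rightarrow> 'a \<Rightarrow> complex) \<Rightarrow> bool" where
  "psd_on A M \<longleftrightarrow> (\<forall>v. 0 \<le> (\<Sum>x\<in>A. \<Sum>y\<in>A. cnj (v x) * M x y * v y))"

definition linear_map :: "(('i \<Rightarrow> 'i \<Rightarrow> complex) \<Rightarrow> ('o \<Rightarrow> 'o \<Rightarrow> complex)) \<Rightarrow> bool" where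
  "linear_map \<Phi> \<longleftrightarrow>
     (\<forall>a X Y. \<Phi> (\<lambda>r c. a * X r c + Y r c) = (\<lambda>r c. a * \<Phi> X r c + \<Phi> Y r c))"

text \<open>Complete positivity: Phi tensor id_{M_n} is positive for every n.\<close>
definition completely_positive :: "(('i \<Rightarrow> 'i \<Rightarrow> complex) \<Rightarrow> ('o \<Rightarrow> 'o \<Rightarrow> complex)) \<Rightarrow> bool" where
  "completely_positive \<Phi> \<longleftrightarrow>
     (\<forall>n::nat. \<forall>X :: 'i \<times> nat \<Rightarrow> 'i \<times> nat \<Rightarrow> complex.
        psd_on (UNIV \<times> {..<n}) X \<longrightarrow>
        psd_on (UNIV \<times> {..<n}) (\<lambda>(p, k) (q, k'). \<Phi> (\<lambda>i j. X (i, k) (j, k')) p q))"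

definition trace_preserving :: "(('i::finite \<Rightarrow> 'i \<Rightarrow> complex) \<Rightarrow> ('o::finite \<Rightarrow> 'o \<Rightarrow> complex)) \<Rightarrow> bool" where
  "trace_preserving \<Phi> \<longleftrightarrow> (\<forall>X. (\<Sum>p\<in>UNIV. \<Phi> X p p) = (\<Sum>i\<in>UNIV. X i i))"

definition quantum_channel :: "(('i::finite \<Rightarrow> 'i \<Rightarrow> complex) \<Rightarrow> ('o::finite \<Rightarrow> 'o \<Rightarrow> complex)) \<Rightarrow> bool" where
  "quantum_channel \<Phi> \<longleftrightarrow> linear_map \<Phi> \<and> completely_positive \<Phi> \<and> trace_preserving \<Phi>"

text \<open>Elements of B(H_a,H_b) tensor O are represented by their coefficients:
  x (b,p) (a,q) is the coefficient of e_{ba} tensor e_{pq}.\<close>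

text \<open>Product in B(H_b,H_c) tensor O^op times B(H_a,H_b) tensor O^op:
  (a tensor b) * (c tensor d) = ac tensor db.\<close>
definition opmul :: "('c \<times> 'o \<Rightarrow> 'b \<times> 'o \<Rightarrow> complex) \<Rightarrow> ('b::finite \<times> 'o::finite \<Rightarrow> 'a \<times> 'o \<Rightarrow> complex)
                      \<Rightarrow> ('c \<times> 'o \<Rightarrow> 'a \<times> 'o \<Rightarrow> complex)" where
  "opmul x y = (\<lambda>(c, p) (a, q). \<Sum>b\<in>UNIV. \<Sum>s\<in>UNIV. x (c, s) (b, q) * y (b, p) (a, s))"

definition adj :: "('b \<times> 'o \<Rightarrow> 'a \<times> 'o \<Rightarrow> complex) \<Rightarrow> ('a \<times> 'o \<Rightarrow> 'b \<times> 'o \<Rightarrow> complex)" where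
  "adj x = (\<lambda>(a, p) (b, q). cnj (x (b, q) (a, p)))"

text \<open>C_Phi = sum_{i,j} e_{ij} tensor Phi(e_{ji}).\<close>
definition choi_op :: "(('i \<Rightarrow> 'i \<Rightarrow> complex) \<Rightarrow> ('o \<Rightarrow> 'o \<Rightarrow> complex)) \<Rightarrow> ('i \<times> 'o \<Rightarrow> 'i \<times> 'o \<Rightarrow> complex)" where
  "choi_op \<Phi> = (\<lambda>(i, p) (j, q). \<Phi> (mat_unit j i) p q)"

text \<open>Stinespring module (E, W) with E = L tensor O^op (L a finite-dimensional
  Hilbert space with basis indexed by 'l), W in L(M_Phi, E) = B(H_in, L) tensor O^op,
  W^* W = C_Phi.\<close>
definition stinespring_map :: "(('i::finite \<Rightarrow> 'i \<Rightarrow> complex) \<Rightarrow> ('o::finite \<Rightarrow> 'o \<Rightarrow> complex))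
      \<Rightarrow> ('l::finite \<times> 'o \<Rightarrow> 'i \<times> 'o \<Rightarrow> complex) \<Rightarrow> bool" where
  "stinespring_map \<Phi> W \<longleftrightarrow> opmul (adj W) W = choi_op \<Phi>"

text \<open>Quantum confusability multigraph W^* L(E) W, with L(E) = B(L) tensor O^op.\<close>
definition conf_multigraph :: "(('i::finite \<Rightarrow> 'i \<Rightarrow> complex) \<Rightarrow> ('o::finite \<Rightarrow> 'o \<Rightarrow> complex))
      \<Rightarrow> ('l::finite \<times> 'o \<Rightarrow> 'i \<times> 'o \<Rightarrow> complex) \<Rightarrow> ('i \<times> 'o \<Rightarrow> 'i \<times> 'o \<Rightarrow> complex) set" where
  "conf_multigraph \<Phi> W =
     {opmul (opmul (adj W) X) W | X :: 'l \<times> 'o \<Rightarrow> 'l \<times> 'o \<Rightarrow> complex. True}"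

text \<open>pi_op(T) conj(xi) = conj(T^* xi); in the basis conj(e_o) its matrix is the
  transpose of T.\<close>
definition pi_op :: "('o \<Rightarrow> 'o \<Rightarrow> complex) \<Rightarrow> ('o \<Rightarrow> 'o \<Rightarrow> complex)" where
  "pi_op T = (\<lambda>p q. T q p)"

text \<open>(id tensor pi_op)(x), an operator on H_in tensor conj(H_out) (basis e_i tensor conj(e_p)).\<close>
definition id_pi_op :: "('i \<times> 'o \<Rightarrow> 'i \<times> 'o \<Rightarrow> complex) \<Rightarrow> ('i \<times> 'o \<Rightarrow> 'i \<times> 'o \<Rightarrow> complex)" where
  "id_pi_op x = (\<lambda>(i, p) (j, q). pi_op (\<lambda>a b. x (i, a) (j, b)) p q)"

definition range_op :: "('a \<Rightarrow> 'a::finite \<Rightarrow> complex) \<Rightarrow> ('a \<Rightarrow> complex) set" where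
  "range_op D = {(\<lambda>r. \<Sum>c\<in>UNIV. D r c * v c) | v. True}"

text \<open>Identification B(H_in) tensor B(conj H_out) = (H_in tensor conj H_out) tensor (conj H_in tensor H_out),
  theta_{xi,eta} tensor theta_{conj zeta, conj omega} |-> (xi tensor conj zeta) tensor (conj eta tensor omega).
  In coordinates (basis (e_i tensor conj e_p) tensor (conj e_j tensor e_q)) this is the
  identity on coefficients.\<close>
definition hs_ident :: "('a \<Rightarrow> 'a \<Rightarrow> complex) \<Rightarrow> ('a \<times> 'a \<Rightarrow> complex)" where
  "hs_ident Y = (\<lambda>(r, c). Y r c)"

text \<open>v tensor conj(w), conj(w) having coordinates cnj (w r) in the conjugate basis.\<close>
definition tensor_conj :: "('a \<Rightarrow> complex) \<Rightarrow> ('a \<Rightarrow> complex) \<Rightarrow> ('a \<times> 'a \<Rightarrow> complex)" where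
  "tensor_conj v w = (\<lambda>(r, c). v r * cnj (w c))"

definition cspan :: "('b \<Rightarrow> complex) set \<Rightarrow> ('b \<Rightarrow> complex) set" where
  "cspan S = {y. \<exists>F f. finite F \<and> F \<subseteq> S \<and> y = (\<lambda>t. \<Sum>x\<in>F. f x * x t)}"

definition tensor_with_conj :: "('a \<Rightarrow> complex) set \<Rightarrow> ('a \<times> 'a \<Rightarrow> complex) set" where
  "tensor_with_conj V = cspan {tensor_conj v w | v w. v \<in> V \<and> w \<in> V}"

end

theory Submission
  imports Defs "HOL-Analysis.Analysis"
begin

text \<open>In coordinates, id \<otimes> pi_op is the partial transpose on the output factor. Since pi_op
  reverses products, the partial transpose turns the product of O^op-valued matrices into the
  ordinary matrix product and the involution into the conjugate transpose. Writing A for the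
  conjugate transpose of the partially transposed W, the image of W^* L(E) W is therefore the set
  of all A Y A^*, and the image of C_\<Phi> = W^* W is A A^*, whose range V equals that of A. Finally
  A Y A^* = \<Sum> Y_ab (A e_a) \<otimes> conj (A e_b) under the Hilbert space identification, and the
  columns A e_a span V, so these operators fill out exactly V \<otimes> conj V.\<close>

definition mat_vec :: "('r \<Rightarrow> 'c::finite \<Rightarrow> complex) \<Rightarrow> ('c \<Rightarrow> complex) \<Rightarrow> 'r \<Rightarrow> complex" where
  "mat_vec M v = (\<lambda>r. \<Sum>c\<in>UNIV. M r c * v c)"

definition mat_mult :: "('r \<Rightarrow> 'k::finite \<Rightarrow> complex) \<Rightarrow> ('k \<Rightarrow> 'c \<Rightarrow> complex) \<Rightarrow> 'r \<Rightarrow> 'c \<Rightarrow> complex" where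
  "mat_mult X Y = (\<lambda>r c. \<Sum>k\<in>UNIV. X r k * Y k c)"

definition conj_transpose :: "('r \<Rightarrow> 'c \<Rightarrow> complex) \<Rightarrow> 'c \<Rightarrow> 'r \<Rightarrow> complex" where
  "conj_transpose M = (\<lambda>r c. cnj (M c r))"

definition cinner :: "('k::finite \<Rightarrow> complex) \<Rightarrow> ('k \<Rightarrow> complex) \<Rightarrow> complex" where
  "cinner z w = (\<Sum>t\<in>UNIV. cnj (z t) * w t)"

definition sandwich :: "('r \<Rightarrow> 'k::finite \<Rightarrow> complex) \<Rightarrow> ('k \<Rightarrow> 'k \<Rightarrow> complex) \<Rightarrow> 'r \<Rightarrow> 'r \<Rightarrow> complex" where
  "sandwich A Y = mat_mult (mat_mult A Y) (conj_transpose A)"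

definition partial_transpose :: "('a \<times> 'o \<Rightarrow> 'b \<times> 'o \<Rightarrow> complex) \<Rightarrow> 'a \<times> 'o \<Rightarrow> 'b \<times> 'o \<Rightarrow> complex" where
  "partial_transpose x = (\<lambda>(i, p) (j, q). x (i, q) (j, p))"

lemma conj_transpose_conj_transpose [simp]: "conj_transpose (conj_transpose M) = M"
  by (simp add: conj_transpose_def)

lemma mat_vec_mat_mult: "mat_vec (mat_mult X Y) v = mat_vec X (mat_vec Y v)"
proof
  fix r
  have "mat_vec (mat_mult X Y) v r = (\<Sum>c\<in>UNIV. \<Sum>k\<in>UNIV. X r k * Y k c * v c)"
    unfolding mat_vec_def mat_mult_def by (simp add: sum_distrib_right)
  also have "\<dots> = (\<Sum>k\<in>UNIV. \<Sum>c\<in>UNIV. X r k * Y k c * v c)"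
    by (rule sum.swap)
  also have "\<dots> = mat_vec X (mat_vec Y v) r"
    unfolding mat_vec_def by (simp add: sum_distrib_left mult.assoc)
  finally show "mat_vec (mat_mult X Y) v r = mat_vec X (mat_vec Y v) r" .
qed

lemma range_mat_vec_mat_mult_subset: "range (mat_vec (mat_mult X Y)) \<subseteq> range (mat_vec X)"
  by (auto simp: mat_vec_mat_mult)

lemma cinner_mat_vec_adjoint:
  "cinner z (mat_vec A y) = cinner (mat_vec (conj_transpose A) z) y"
proof -
  have "cinner z (mat_vec A y) = (\<Sum>t\<in>UNIV. \<Sum>k\<in>UNIV. cnj (z t) * A t k * y k)"
    unfolding cinner_def mat_vec_def by (simp add: sum_distrib_left mult.assoc)
  also have "\<dots> = (\<Sum>k\<in>UNIV. \<Sum>t\<in>UNIV. cnj (z t) * A t k * y k)"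
    by (rule sum.swap)
  also have "\<dots> = cinner (mat_vec (conj_transpose A) z) y"
    unfolding cinner_def mat_vec_def conj_transpose_def
    by (simp add: sum_distrib_left sum_distrib_right ac_simps)
  finally show ?thesis .
qed

lemma cinner_self_Re_eq_0:
  assumes "Re (cinner q q) = 0"
  shows "q = (\<lambda>_. 0)"
proof -
  have "(\<Sum>k\<in>UNIV. (Re (q k))\<^sup>2 + (Im (q k))\<^sup>2) = 0"
    using assms by (simp add: cinner_def Re_sum power2_eq_square)
  then have "\<forall>k. (Re (q k))\<^sup>2 + (Im (q k))\<^sup>2 = 0"
    by (subst (asm) sum_nonneg_eq_0_iff) auto
  then show ?thesis
    by (auto simp: fun_eq_iff complex_eq_iff)
qed

lemma range_mat_vec_closed:
  "(\<lambda>_. 0) \<in> range (mat_vec M)"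
  "a \<in> range (mat_vec M) \<Longrightarrow> b \<in> range (mat_vec M) \<Longrightarrow> (\<lambda>t. a t + b t) \<in> range (mat_vec M)"
  "a \<in> range (mat_vec M) \<Longrightarrow> (\<lambda>t. c * a t) \<in> range (mat_vec M)"
proof -
  show "(\<lambda>_. 0) \<in> range (mat_vec M)"
    by (rule range_eqI[of _ _ "\<lambda>_. 0"]) (simp add: mat_vec_def)
next
  assume "a \<in> range (mat_vec M)" "b \<in> range (mat_vec M)"
  then obtain u v where "a = mat_vec M u" "b = mat_vec M v" by auto
  then show "(\<lambda>t. a t + b t) \<in> range (mat_vec M)"
    by (intro range_eqI[of _ _ "\<lambda>c. u c + v c"])
      (simp add: mat_vec_def distrib_left sum.distrib)
next
  assume "a \<in> range (mat_vec M)"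
  then obtain u where "a = mat_vec M u" by auto
  then show "(\<lambda>t. c * a t) \<in> range (mat_vec M)"
    by (intro range_eqI[of _ _ "\<lambda>k. c * u k"])
      (simp add: mat_vec_def sum_distrib_left mult.left_commute)
qed

text \<open>The real inner product of the Euclidean space \<open>complex^'n\<close> is \<open>Re \<circ> cinner\<close>, so the
  projection theorem of HOL-Analysis applies.\<close>
lemma orthogonal_decomposition:
  fixes R :: "('n::finite \<Rightarrow> complex) set"
  assumes zero: "(\<lambda>_. 0) \<in> R"
    and add: "\<And>a b. a \<in> R \<Longrightarrow> b \<in> R \<Longrightarrow> (\<lambda>t. a t + b t) \<in> R"
    and scale: "\<And>c a. a \<in> R \<Longrightarrow> (\<lambda>t. c * a t) \<in> R"
  obtains u z where "u \<in> R" "x = (\<lambda>t. u t + z t)" "\<And>w. w \<in> R \<Longrightarrow> Re (cinner z w) = 0"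
proof -
  let ?S = "(vec_lambda :: ('n \<Rightarrow> complex) \<Rightarrow> complex^'n) ` R"
  have "subspace ?S"
    unfolding subspace_def
  proof (intro conjI ballI allI)
    show "0 \<in> ?S"
      using zero by (force simp: vec_eq_iff)
    fix a b assume "a \<in> ?S" "b \<in> ?S"
    then obtain a' b' where "a' \<in> R" "b' \<in> R" "a = vec_lambda a'" "b = vec_lambda b'" by auto
    then show "a + b \<in> ?S"
      using add[of a' b'] by (force simp: vec_eq_iff intro!: image_eqI[of _ _ "\<lambda>t. a' t + b' t"])
  next
    fix c :: real and a assume "a \<in> ?S"
    then obtain a' where "a' \<in> R" "a = vec_lambda a'" by auto
    then have "c *\<^sub>R a = vec_lambda (\<lambda>t. of_real c * a' t)"
      by (simp add: vec_eq_iff del: of_real_mult, simp add: scaleR_conv_of_real)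
    then show "c *\<^sub>R a \<in> ?S"
      using scale[of a' "of_real c"] \<open>a' \<in> R\<close> by simp
  qed
  then have span_S: "span ?S = ?S"
    by (simp add: span_eq_iff)
  obtain y z where y: "y \<in> span ?S" and z: "\<And>w. w \<in> span ?S \<Longrightarrow> orthogonal z w"
    and xyz: "vec_lambda x = y + z"
    using orthogonal_subspace_decomp_exists[of ?S "vec_lambda x"] by metis
  from y span_S obtain u where u: "u \<in> R" "y = vec_lambda u" by auto
  show ?thesis
  proof
    show "u \<in> R" by fact
    show "x = (\<lambda>t. u t + z $ t)"
      using xyz u by (simp add: vec_eq_iff fun_eq_iff)
    fix w assume "w \<in> R"
    then have "orthogonal z (vec_lambda w)"
      using z span_S by auto
    then show "Re (cinner (\<lambda>t. z $ t) w) = 0"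
      by (simp add: orthogonal_def inner_vec_def cinner_def Re_sum inner_complex_def)
  qed
qed

text \<open>If z = A y is orthogonal to the range of A A^*, then |A^* z|^2 = <z, A A^* z> = 0,
  hence |z|^2 = <A^* z, y> = 0.\<close>
lemma range_mat_vec_mat_mult_conj_transpose:
  "range (mat_vec (mat_mult A (conj_transpose A))) = range (mat_vec A)"
proof
  let ?AA = "mat_mult A (conj_transpose A)"
  show "range (mat_vec ?AA) \<subseteq> range (mat_vec A)"
    by (rule range_mat_vec_mat_mult_subset)
  show "range (mat_vec A) \<subseteq> range (mat_vec ?AA)"
  proof
    fix x assume x: "x \<in> range (mat_vec A)"
    obtain u z where u: "u \<in> range (mat_vec ?AA)" and xuz: "x = (\<lambda>t. u t + z t)"
      and z_orth: "\<And>w. w \<in> range (mat_vec ?AA) \<Longrightarrow> Re (cinner z w) = 0"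
      using orthogonal_decomposition[of "range (mat_vec ?AA)" x,
          OF range_mat_vec_closed(1) range_mat_vec_closed(2) range_mat_vec_closed(3)]
      by blast
    have "(\<lambda>t. (-1) * u t) \<in> range (mat_vec A)"
      using u range_mat_vec_mat_mult_subset by (intro range_mat_vec_closed(3)) blast
    with x have "(\<lambda>t. x t + (-1) * u t) \<in> range (mat_vec A)"
      by (rule range_mat_vec_closed(2))
    moreover have "(\<lambda>t. x t + (-1) * u t) = z"
      using xuz by simp
    ultimately obtain y where y: "z = mat_vec A y"
      by (metis imageE)
    have "Re (cinner z (mat_vec ?AA z)) = 0"
      using z_orth by blast
    then have "Re (cinner (mat_vec (conj_transpose A) z) (mat_vec (conj_transpose A) z)) = 0"
      by (simp add: mat_vec_mat_mult cinner_mat_vec_adjoint)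
    then have "mat_vec (conj_transpose A) z = (\<lambda>_. 0)"
      by (rule cinner_self_Re_eq_0)
    then have "cinner z z = 0"
      using cinner_mat_vec_adjoint[of z A y] y by (simp add: cinner_def)
    then have "z = (\<lambda>_. 0)"
      by (intro cinner_self_Re_eq_0) simp
    then show "x \<in> range (mat_vec ?AA)"
      using xuz u by simp
  qed
qed

lemma partial_transpose_partial_transpose [simp]: "partial_transpose (partial_transpose x) = x"
  by (simp add: partial_transpose_def fun_eq_iff split: prod.splits)

lemma id_pi_op_eq_partial_transpose: "id_pi_op x = partial_transpose x"
  by (simp add: partial_transpose_def id_pi_op_def pi_op_def fun_eq_iff split: prod.splits)

lemma partial_transpose_adj: "partial_transpose (adj x) = conj_transpose (partial_transpose x)"
  by (simp add: partial_transpose_def adj_def conj_transpose_def fun_eq_iff split: prod.splits)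

lemma partial_transpose_opmul:
  "partial_transpose (opmul x y) = mat_mult (partial_transpose x) (partial_transpose y)"
proof (intro ext, clarify)
  fix c p a q
  show "partial_transpose (opmul x y) (c, p) (a, q)
      = mat_mult (partial_transpose x) (partial_transpose y) (c, p) (a, q)"
    unfolding mat_mult_def partial_transpose_def opmul_def
    by (simp add: UNIV_Times_UNIV[symmetric] sum.cartesian_product case_prod_beta
        del: UNIV_Times_UNIV)
qed

lemma cspan_base: "x \<in> S \<Longrightarrow> x \<in> cspan S"
  unfolding cspan_def by (auto intro!: exI[of _ "{x}"] exI[of _ "\<lambda>_. 1"])

lemma cspan_lincomb:
  assumes "finite I" "\<And>x. x \<in> I \<Longrightarrow> g x \<in> cspan S"
  shows "(\<lambda>t. \<Sum>x\<in>I. c x * g x t) \<in> cspan S"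
  using assms
proof (induction I rule: finite_induct)
  case empty
  show ?case
    unfolding cspan_def by (auto intro!: exI[of _ "{}"])
next
  case (insert y I)
  obtain F1 f1 where F1: "finite F1" "F1 \<subseteq> S" "g y = (\<lambda>t. \<Sum>x\<in>F1. f1 x * x t)"
    using insert.prems unfolding cspan_def by blast
  obtain F2 f2 where F2: "finite F2" "F2 \<subseteq> S"
    "(\<lambda>t. \<Sum>x\<in>I. c x * g x t) = (\<lambda>t. \<Sum>x\<in>F2. f2 x * x t)"
    using insert unfolding cspan_def by blast
  define f where "f x = c y * (if x \<in> F1 then f1 x else 0) + (if x \<in> F2 then f2 x else 0)" for x
  have "(\<lambda>t. \<Sum>x\<in>insert y I. c x * g x t) = (\<lambda>t. \<Sum>x\<in>F1 \<union> F2. f x * x t)"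
  proof
    fix t
    have "(\<Sum>x\<in>insert y I. c x * g x t) = c y * (\<Sum>x\<in>F1. f1 x * x t) + (\<Sum>x\<in>F2. f2 x * x t)"
      using insert.hyps F1(3) fun_cong[OF F2(3), of t] by simp
    also have "\<dots> = c y * (\<Sum>x\<in>F1 \<union> F2. (if x \<in> F1 then f1 x else 0) * x t)
        + (\<Sum>x\<in>F1 \<union> F2. (if x \<in> F2 then f2 x else 0) * x t)"
    proof -
      have "(\<Sum>x\<in>F1 \<union> F2. (if x \<in> F1 then f1 x else 0) * x t) = (\<Sum>x\<in>F1. f1 x * x t)"
        by (rule sum.mono_neutral_cong_right) (use F1 F2 in auto)
      moreover have "(\<Sum>x\<in>F1 \<union> F2. (if x \<in> F2 then f2 x else 0) * x t) = (\<Sum>x\<in>F2. f2 x * x t)"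
        by (rule sum.mono_neutral_cong_right) (use F1 F2 in auto)
      ultimately show ?thesis
        by simp
    qed
    also have "\<dots> = (\<Sum>x\<in>F1 \<union> F2. f x * x t)"
      by (simp add: f_def distrib_right sum.distrib sum_distrib_left mult.assoc)
    finally show "(\<Sum>x\<in>insert y I. c x * g x t) = (\<Sum>x\<in>F1 \<union> F2. f x * x t)" .
  qed
  then show ?case
    unfolding cspan_def using F1 F2 by blast
qed

lemma hs_ident_sandwich:
  "hs_ident (sandwich A Y)
     = (\<lambda>t. \<Sum>p\<in>UNIV. Y (fst p) (snd p) * tensor_conj (\<lambda>r. A r (fst p)) (\<lambda>r. A r (snd p)) t)"
proof (intro ext, clarify)
  fix r c
  have "hs_ident (sandwich A Y) (r, c) = (\<Sum>b\<in>UNIV. \<Sum>a\<in>UNIV. Y a b * (A r a * cnj (A c b)))"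
    unfolding hs_ident_def sandwich_def mat_mult_def conj_transpose_def
    by (simp add: sum_distrib_left sum_distrib_right ac_simps)
  also have "\<dots> = (\<Sum>a\<in>UNIV. \<Sum>b\<in>UNIV. Y a b * (A r a * cnj (A c b)))"
    by (rule sum.swap)
  also have "\<dots> = (\<Sum>p\<in>UNIV. Y (fst p) (snd p) * tensor_conj (\<lambda>r. A r (fst p)) (\<lambda>r. A r (snd p)) (r, c))"
    by (simp add: tensor_conj_def UNIV_Times_UNIV[symmetric] sum.cartesian_product case_prod_beta
        del: UNIV_Times_UNIV)
  finally show "hs_ident (sandwich A Y) (r, c)
      = (\<Sum>p\<in>UNIV. Y (fst p) (snd p) * tensor_conj (\<lambda>r. A r (fst p)) (\<lambda>r. A r (snd p)) (r, c))" .
qed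

lemma tensor_conj_mat_vec:
  "tensor_conj (mat_vec A v) (mat_vec A w) = hs_ident (sandwich A (\<lambda>a b. v a * cnj (w b)))"
  unfolding tensor_conj_def hs_ident_def sandwich_def mat_mult_def mat_vec_def conj_transpose_def
  by (simp add: fun_eq_iff sum_distrib_left sum_distrib_right mult.commute mult.left_commute)

lemma sandwich_lincomb:
  "sandwich A (\<lambda>a b. c * Y a b + Z a b) = (\<lambda>r s. c * sandwich A Y r s + sandwich A Z r s)"
  unfolding sandwich_def mat_mult_def
  by (simp add: algebra_simps sum.distrib sum_distrib_left)

lemma column_in_range_mat_vec: "(\<lambda>r. A r a) \<in> range (mat_vec A)"
  by (rule range_eqI[of _ _ "\<lambda>k. if k = a then 1 else 0"])
    (simp add: mat_vec_def if_distrib cong: if_cong)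

lemma lincomb_in_hs_ident_range_sandwich:
  assumes "finite F" "F \<subseteq> hs_ident ` range (sandwich A)"
  shows "(\<lambda>t. \<Sum>x\<in>F. f x * x t) \<in> hs_ident ` range (sandwich A)"
  using assms
proof (induction F rule: finite_induct)
  case empty
  have "(\<lambda>t. \<Sum>x\<in>{}. f x * x t) = hs_ident (sandwich A (\<lambda>_ _. 0))"
    by (simp add: hs_ident_def sandwich_def mat_mult_def fun_eq_iff split: prod.split)
  then show ?case
    by blast
next
  case (insert x F)
  then obtain Y Z where "x = hs_ident (sandwich A Y)"
    and "(\<lambda>t. \<Sum>x\<in>F. f x * x t) = hs_ident (sandwich A Z)"
    by blast
  then have "(\<lambda>t. \<Sum>x\<in>insert x F. f x * x t)
      = hs_ident (sandwich A (\<lambda>a b. f x * Y a b + Z a b))"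
    using insert.hyps unfolding sandwich_lincomb
    by (simp add: hs_ident_def fun_eq_iff split: prod.split)
  then show ?case
    by blast
qed

lemma tensor_conj_range_mat_vec_in_hs_ident_range_sandwich:
  assumes "v \<in> range (mat_vec A)" "w \<in> range (mat_vec A)"
  shows "tensor_conj v w \<in> hs_ident ` range (sandwich A)"
proof -
  obtain a b where "v = mat_vec A a" "w = mat_vec A b"
    using assms by blast
  then have "tensor_conj v w = hs_ident (sandwich A (\<lambda>i j. a i * cnj (b j)))"
    by (simp add: tensor_conj_mat_vec)
  then show ?thesis
    by blast
qed

lemma hs_ident_range_sandwich:
  fixes A :: "'n \<Rightarrow> 'm::finite \<Rightarrow> complex"
  shows "hs_ident ` range (sandwich A) = tensor_with_conj (range (mat_vec A))"
proof
  show "hs_ident ` range (sandwich A) \<subseteq> tensor_with_conj (range (mat_vec A))"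
  proof clarify
    fix Y
    have "tensor_conj (\<lambda>r. A r a) (\<lambda>r. A r b) \<in> tensor_with_conj (range (mat_vec A))" for a b
      unfolding tensor_with_conj_def using column_in_range_mat_vec by (blast intro: cspan_base)
    then show "hs_ident (sandwich A Y) \<in> tensor_with_conj (range (mat_vec A))"
      unfolding hs_ident_sandwich tensor_with_conj_def
      by (intro cspan_lincomb[where c = "\<lambda>p. Y (fst p) (snd p)"
            and g = "\<lambda>p. tensor_conj (\<lambda>r. A r (fst p)) (\<lambda>r. A r (snd p))"]) simp_all
  qed
  show "tensor_with_conj (range (mat_vec A)) \<subseteq> hs_ident ` range (sandwich A)"
  proof
    fix y assume "y \<in> tensor_with_conj (range (mat_vec A))"
    then obtain F f where "finite F" and y: "y = (\<lambda>t. \<Sum>x\<in>F. f x * x t)"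
      and F: "F \<subseteq> {tensor_conj v w | v w. v \<in> range (mat_vec A) \<and> w \<in> range (mat_vec A)}"
      unfolding tensor_with_conj_def cspan_def by blast
    from F have "F \<subseteq> hs_ident ` range (sandwich A)"
      using tensor_conj_range_mat_vec_in_hs_ident_range_sandwich by blast
    with \<open>finite F\<close> show "y \<in> hs_ident ` range (sandwich A)"
      unfolding y by (rule lincomb_in_hs_ident_range_sandwich)
  qed
qed

lemma range_op_eq_range_mat_vec: "range_op D = range (mat_vec D)"
  by (auto simp: range_op_def mat_vec_def)

theorem proposition3p19:
  fixes \<Phi> :: "('i::finite \<Rightarrow> 'i \<Rightarrow> complex) \<Rightarrow> ('o::finite \<Rightarrow> 'o \<Rightarrow> complex)"
    and W :: "'l::finite \<times> 'o \<Rightarrow> 'i \<times> 'o \<Rightarrow> complex"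
  assumes "quantum_channel \<Phi>"
    and "stinespring_map \<Phi> W"
  shows "hs_ident ` id_pi_op ` conf_multigraph \<Phi> W
           = tensor_with_conj (range_op (id_pi_op (choi_op \<Phi>)))"
proof -
  define A where "A = conj_transpose (partial_transpose W)"
  have id_pi_op_sandwich:
    "id_pi_op (opmul (opmul (adj W) X) W) = sandwich A (partial_transpose X)" for X
    by (simp add: A_def sandwich_def id_pi_op_eq_partial_transpose partial_transpose_opmul
        partial_transpose_adj)
  have "conf_multigraph \<Phi> W = range (\<lambda>X. opmul (opmul (adj W) X) W)"
    by (auto simp: conf_multigraph_def)
  then have "id_pi_op ` conf_multigraph \<Phi> W = sandwich A ` range partial_transpose"
    by (simp only: image_image id_pi_op_sandwich)
  also have "range partial_transpose = UNIV"
    by (metis partial_transpose_partial_transpose surjI)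
  finally have multigraph: "id_pi_op ` conf_multigraph \<Phi> W = range (sandwich A)" .
  have "id_pi_op (choi_op \<Phi>) = partial_transpose (opmul (adj W) W)"
    using assms(2) by (simp add: stinespring_map_def id_pi_op_eq_partial_transpose)
  then have choi: "id_pi_op (choi_op \<Phi>) = mat_mult A (conj_transpose A)"
    by (simp add: A_def partial_transpose_opmul partial_transpose_adj)
  show ?thesis
    unfolding multigraph choi range_op_eq_range_mat_vec range_mat_vec_mat_mult_conj_transpose
    by (rule hs_ident_range_sandwich)
qed

end
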